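(* Consider the over-the-air federated learning system described in the context, with the correlated perturbation mechanism, observed by the adversary over $T$ rounds. Suppose that for every round $t\in\{1,\dots,T\}$, every sample-wise gradient satisfies $\|\nabla f(\mathbf{w}^{(t)},\boldsymbol{\mu},\nu)\|\le\gamma^{(t)}$ for all possible data points $(\boldsymbol{\mu},\nu)$. Let $\rho^{(t)}_{\max}=\max_k|\rho^{(t)}_k|$ and let $C(x)=\sqrt{\pi}\,x\,e^{x^2}$ for $x>0$ (which is strictly increasing on $(0,\infty)$, with inverse $C^{-1}$). If $$\sum_{t=1}^{T}\left(\frac{2\gamma^{(t)}}{m^{(t)}}\sqrt{\eta^{(t)}}\,\rho^{(t)}_{\max}\right)^2<\left(\sqrt{\epsilon+\big(C^{-1}(1/\delta)\big)^2}-C^{-1}(1/\delta)\right)^2=:\mathcal{R}_{dp}(\epsilon,\delta),$$ then the mechanism is $(\epsilon,\delta)$-differentially private with respect to the adversary's observations $\mathbf{y}_a=\{\mathbf{y}_a^{(t)}\}_{t=1}^T$, i.e. for every pair of neighboring global datasets $\mathcal{D},\mathcal{D}'$, $\mathrm{P}\big(|\mathcal{L}_{\mathcal{D},\mathcal{D}'}(\mathbf{y}_a)|\le\epsilon\big)\ge 1-\delta$.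
   Context: System: $K$ users, each with a local dataset $\mathcal{D}_k$ of $D$ data points $(\boldsymbol{\mu},\nu)$; global dataset $\mathcal{D}=\cup_k\mathcal{D}_k$. A model $\mathbf{w}\in\mathbb{R}^d$ is trained over rounds $t=1,\dots,T$; at round $t$ with current model $\mathbf{w}^{(t)}$, user $k$ computes the local gradient $\nabla F_k(\mathbf{w}^{(t)},\mathcal{D}_k)=\sum_{(\boldsymbol{\mu},\nu)\in\mathcal{D}_k}\nabla f(\mathbf{w}^{(t)},\boldsymbol{\mu},\nu)$ for a sample-wise loss $f$. User $k$ transmits $\mathbf{x}_k^{(t)}=\frac{\sqrt{\eta^{(t)}}}{h_k^{(t)}}\big(\nabla F_k(\mathbf{w}^{(t)},\mathcal{D}_k)+\mathbf{n}_k^{(t)}\big)$, where $h_k^{(t)}\in\mathbb{C}$ is its channel to the server and $\eta^{(t)}>0$ is a common power scaling factor. The perturbations are generated as the rows of $\mathbf{N}^{(t)}=(\mathbf{R}^{(t)})^{1/2}\mathbf{W}^{(t)}$, where $\mathbf{W}^{(t)}$ is a $K\times d$ matrix of i.i.d. $\mathcal{CN}(0,1)$ entries, independent across rounds, and $\mathbf{R}^{(t)}\succeq0$ is a $K\times K$ covariance matrix with $\sum_{k,j}\mathbf{R}^{(t)}_{k,j}=0$ (so $\sum_k\mathbf{n}_k^{(t)}=\mathbf{0}$). With $g_k^{(t)}\in\mathbb{C}$ the channel from user $k$ to the adversary and $\rho_k^{(t)}=g_k^{(t)}/h_k^{(t)}$, $\boldsymbol{\rho}^{(t)}=(\rho_1^{(t)},\dots,\rho_K^{(t)})^T$,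 the adversary receives $\mathbf{y}_a^{(t)}=\sqrt{\eta^{(t)}}\sum_k\rho_k^{(t)}\nabla F_k(\mathbf{w}^{(t)},\mathcal{D}_k)+\mathbf{r}^{(t)}$, where the effective noise $\mathbf{r}^{(t)}=\sqrt{\eta^{(t)}}\big((\boldsymbol{\rho}^{(t)})^T(\mathbf{R}^{(t)})^{1/2}\mathbf{W}^{(t)}\big)^T+\mathbf{z}_a^{(t)}$, with $\mathbf{z}_a^{(t)}\sim\mathcal{CN}(0,N_a\mathbf{I}_d)$ i.i.d. across rounds, is distributed as $\mathcal{CN}(0,(m^{(t)})^2\mathbf{I}_d)$, independent across rounds, with $(m^{(t)})^2=\eta^{(t)}(\boldsymbol{\rho}^{(t)})^T\mathbf{R}^{(t)}(\boldsymbol{\rho}^{(t)})^*+N_a$. Two global datasets $\mathcal{D}=\cup_k\mathcal{D}_k$, $\mathcal{D}'=\cup_k\mathcal{D}'_k$ are neighboring if for exactly one index $l$ the local datasets $\mathcal{D}_l,\mathcal{D}'_l$ differ in exactly one sample and $\mathcal{D}_k=\mathcal{D}'_k$ for $k\ne l$. The privacy loss is $\mathcal{L}_{\mathcal{D},\mathcal{D}'}(\mathbf{y}_a)=\ln\prod_{t=1}^T\frac{\mathrm{P}(\mathbf{y}_a^{(t)}\mid\mathbf{y}_a^{(1)},\dots,\mathbf{y}_a^{(t-1)},\mathcal{D})}{\mathrm{P}(\mathbf{y}_a^{(t)}\mid\mathbf{y}_a^{(1)},\dots,\mathbf{y}_a^{(t-1)},\mathcal{D}')}$, where the only randomness is the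 effective noise (the gradients at each round are treated as deterministic given the past). A mechanism is $(\epsilon,\delta)$-differentially private ($\epsilon\ge0$, $\delta\in[0,1]$) if $\mathrm{P}(|\mathcal{L}_{\mathcal{D},\mathcal{D}'}(\mathbf{y}_a)|\le\epsilon)\ge1-\delta$ for all neighboring $\mathcal{D},\mathcal{D}'$. *)

theory Defs
  imports "HOL-Probability.Probability" "HOL-Library.Multiset"
begin

text \<open>Density of the circularly-symmetric complex Gaussian CN(0, s^2 I_d) on complex^'d
  (with respect to Lebesgue measure on complex^'d, i.e. R^(2d)).\<close>
definition cgauss_density :: "real \<Rightarrow> complex^'d \<Rightarrow> real" where
  "cgauss_density s x = (1 / (pi * s\<^sup>2)) ^ CARD('d) * exp (- (norm x)\<^sup>2 / s\<^sup>2)"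

definition cvec :: "real^'d \<Rightarrow> complex^'d" where
  "cvec v = (\<chi> i. complex_of_real (v $ i))"

definition local_grad :: "(real^'d \<Rightarrow> 'z \<Rightarrow> real^'d) \<Rightarrow> real^'d \<Rightarrow> 'z multiset \<Rightarrow> real^'d" where
  "local_grad gradf w Dk = sum_mset (image_mset (gradf w) Dk)"

definition ch_ratio :: "(nat \<Rightarrow> 'k \<Rightarrow> complex) \<Rightarrow> (nat \<Rightarrow> 'k \<Rightarrow> complex) \<Rightarrow> nat \<Rightarrow> 'k \<Rightarrow> complex" where
  "ch_ratio g h t k = g t k / h t k"

definition rho_max :: "('k::finite \<Rightarrow> complex) \<Rightarrow> real" where
  "rho_max rho = Max ((\<lambda>k. cmod (rho k)) ` UNIV)"

definition quad_form :: "('k::finite \<Rightarrow> complex) \<Rightarrow> ('k \<Rightarrow> 'k \<Rightarrow> complex) \<Rightarrow> complex" where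
  "quad_form rho R = (\<Sum>k\<in>UNIV. \<Sum>j\<in>UNIV. rho k * R k j * cnj (rho j))"

definition psd_matrix :: "('k::finite \<Rightarrow> 'k \<Rightarrow> complex) \<Rightarrow> bool" where
  "psd_matrix R \<longleftrightarrow> (\<forall>v::'k \<Rightarrow> complex.
      Im (\<Sum>k\<in>UNIV. \<Sum>j\<in>UNIV. cnj (v k) * R k j * v j) = 0 \<and>
      0 \<le> Re (\<Sum>k\<in>UNIV. \<Sum>j\<in>UNIV. cnj (v k) * R k j * v j))"

definition eff_std :: "real \<Rightarrow> ('k::finite \<Rightarrow> complex) \<Rightarrow> ('k \<Rightarrow> 'k \<Rightarrow> complex) \<Rightarrow> real \<Rightarrow> real" where
  "eff_std eta rho R Na = sqrt (eta * Re (quad_form rho R) + Na)"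

text \<open>Noise-free part of the adversary's observation:
  sqrt(eta) * sum_k rho_k * grad F_k(w, D_k).\<close>
definition adv_mean :: "real \<Rightarrow> ('k::finite \<Rightarrow> complex) \<Rightarrow> (real^'d \<Rightarrow> 'z \<Rightarrow> real^'d)
    \<Rightarrow> real^'d \<Rightarrow> ('k \<Rightarrow> 'z multiset) \<Rightarrow> complex^'d" where
  "adv_mean eta rho gradf w Ds =
     complex_of_real (sqrt eta) *s (\<Sum>k\<in>UNIV. rho k *s cvec (local_grad gradf w (Ds k)))"

definition neighboring :: "nat \<Rightarrow> ('k \<Rightarrow> 'z multiset) \<Rightarrow> ('k \<Rightarrow> 'z multiset) \<Rightarrow> bool" where
  "neighboring D Ds Ds' \<longleftrightarrow>
     (\<forall>k. size (Ds k) = D \<and> size (Ds' k) = D) \<and>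
     (\<exists>l. (\<forall>k. k \<noteq> l \<longrightarrow> Ds k = Ds' k) \<and>
          (\<exists>M s s'. s \<noteq> s' \<and> Ds l = add_mset s M \<and> Ds' l = add_mset s' M))"

definition privacy_loss :: "nat \<Rightarrow> (nat \<Rightarrow> real) \<Rightarrow> (nat \<Rightarrow> complex^'d) \<Rightarrow> (nat \<Rightarrow> complex^'d)
    \<Rightarrow> (nat \<Rightarrow> complex^'d) \<Rightarrow> real" where
  "privacy_loss T m mu mu' y =
     ln (\<Prod>t\<in>{1..T}. cgauss_density (m t) (y t - mu t) / cgauss_density (m t) (y t - mu' t))"

definition ota_dp :: "'w measure \<Rightarrow> nat \<Rightarrow> nat \<Rightarrow> (nat \<Rightarrow> real) \<Rightarrow> (nat \<Rightarrow> 'w \<Rightarrow> complex^'d)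
    \<Rightarrow> (nat \<Rightarrow> ('k \<Rightarrow> 'z multiset) \<Rightarrow> complex^'d) \<Rightarrow> real \<Rightarrow> real \<Rightarrow> bool" where
  "ota_dp M T D m r mean eps delta \<longleftrightarrow>
     (\<forall>Ds Ds'. neighboring D Ds Ds' \<longrightarrow>
        measure M {\<omega> \<in> space M.
          \<bar>privacy_loss T m (\<lambda>t. mean t Ds) (\<lambda>t. mean t Ds') (\<lambda>t. mean t Ds + r t \<omega>)\<bar> \<le> eps}
        \<ge> 1 - delta)"

definition Cfun :: "real \<Rightarrow> real" where
  "Cfun x = sqrt pi * x * exp (x\<^sup>2)"

definition Cinv :: "real \<Rightarrow> real" where
  "Cinv y = (THE x. 0 < x \<and> Cfun x = y)"

definition R_dp :: "real \<Rightarrow> real \<Rightarrow> real" where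
  "R_dp eps delta = (sqrt (eps + (Cinv (1 / delta))\<^sup>2) - Cinv (1 / delta))\<^sup>2"

end

theory Submission
  imports Defs "HOL-Real_Asymp.Real_Asymp"
begin

text \<open>
  For neighbouring datasets only one user's local gradient changes, and only in one sample, so
  in round t the two noise-free observations of the adversary differ by a vector Delta_t with
  norm at most 2 gamma_t sqrt(eta_t) rho_max. As the effective noise r_t is isotropic complex
  Gaussian, the privacy loss equals S + W, where S = sum_t |Delta_t|^2 / m_t^2 is deterministic
  and W = sum_t 2 <r_t, Delta_t> / m_t^2 is, the rounds being independent, a centred real
  Gaussian of variance 2 S. The Mills-ratio bound on the Gaussian tail gives
  P(|W| > a) <= 1 / C(a / (2 sqrt S)); hence the loss exceeds eps with probability below delta
  as soon as S + 2 sqrt(S) C^-1(1/delta) < eps, and this is exactly the condition S < R_dp(eps, delta).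
\<close>

section \<open>The function C and the privacy budget\<close>

lemma Cfun_strict_mono:
  assumes "0 < x" "x < y"
  shows "Cfun x < Cfun y"
proof -
  have "exp (x\<^sup>2) < exp (y\<^sup>2)" using assms by (simp add: power_strict_mono)
  then have "x * exp (x\<^sup>2) < y * exp (y\<^sup>2)"
    using assms by (intro mult_strict_mono) auto
  then show ?thesis unfolding Cfun_def by (simp add: mult.assoc)
qed

lemma Cfun_pos: "0 < x \<Longrightarrow> 0 < Cfun x"
  unfolding Cfun_def by simp

lemma Cinv:
  assumes y: "1 \<le> y"
  shows "0 < Cinv y" and "Cfun (Cinv y) = y"
proof -
  have "1 \<le> sqrt pi * exp (y\<^sup>2)"
    using pi_gt3 one_le_exp_iff[of "y\<^sup>2"] by (intro mult_ge1_I) (auto simp: real_le_rsqrt)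
  then have "y \<le> Cfun y"
    using mult_left_mono[of 1 "sqrt pi * exp (y\<^sup>2)" y] y unfolding Cfun_def by (simp add: ac_simps)
  moreover have "continuous_on {0..y} Cfun" unfolding Cfun_def by (intro continuous_intros)
  ultimately obtain x where x: "0 \<le> x" "x \<le> y" "Cfun x = y"
    using IVT'[of Cfun 0 y y] y by (auto simp: Cfun_def)
  then have "0 < x" using y by (cases "x = 0") (auto simp: Cfun_def)
  have "Cinv y = x" unfolding Cinv_def
  proof (rule the_equality)
    fix z assume "0 < z \<and> Cfun z = y"
    then show "z = x" using Cfun_strict_mono[of z x] Cfun_strict_mono[of x z] \<open>0 < x\<close> x
      by (cases z x rule: linorder_cases) auto
  qed (use x \<open>0 < x\<close> in auto)
  then show "0 < Cinv y" "Cfun (Cinv y) = y" using x \<open>0 < x\<close> by auto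
qed

lemma add_sqrt_mult_Cinv_less_of_less_R_dp:
  assumes S: "0 \<le> S" "S < R_dp eps \<delta>" and eps: "0 \<le> eps" and \<delta>: "0 < \<delta>" "\<delta> \<le> 1"
  shows "S + 2 * sqrt S * Cinv (1 / \<delta>) < eps"
proof -
  define c where "c = Cinv (1 / \<delta>)"
  have c: "0 < c" using Cinv(1)[of "1 / \<delta>"] \<delta> unfolding c_def by simp
  have "c \<le> sqrt (eps + c\<^sup>2)" using eps real_sqrt_le_mono[of "c\<^sup>2" "eps + c\<^sup>2"] c by simp
  moreover have "sqrt S < sqrt ((sqrt (eps + c\<^sup>2) - c)\<^sup>2)"
    using S unfolding R_dp_def c_def[symmetric] by (intro real_sqrt_less_mono)
  ultimately have "sqrt S + c < sqrt (eps + c\<^sup>2)" by simp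
  then have "(sqrt S + c)\<^sup>2 < eps + c\<^sup>2"
    using c S eps by (metis add_nonneg_nonneg less_eq_real_def power_strict_mono real_sqrt_ge_zero
        real_sqrt_pow2 zero_le_power2 zero_less_numeral)
  then show ?thesis using S unfolding c_def[symmetric] by (simp add: power2_sum)
qed

section \<open>Gaussian tails\<close>

lemma nn_integral_normal_density_tail_le:
  fixes \<sigma> a :: real
  assumes \<sigma>: "0 < \<sigma>" and a: "0 < a"
  shows "(\<integral>\<^sup>+x. ennreal (normal_density 0 \<sigma> x) * indicator {a<..} x \<partial>lborel)
          \<le> ennreal (\<sigma>\<^sup>2 / a * normal_density 0 \<sigma> a)"
proof -
  \<comment> \<open>On \<open>x > a\<close> the density is at most \<open>x \<phi>(x) / a\<close>, whose antiderivative is \<open>-\<sigma>\<^sup>2 \<phi>(x) / a\<close>.\<close>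
  have "(\<integral>\<^sup>+x. ennreal (normal_density 0 \<sigma> x) * indicator {a<..} x \<partial>lborel)
      \<le> (\<integral>\<^sup>+x. ennreal (x * normal_density 0 \<sigma> x / a) * indicator {a..} x \<partial>lborel)"
  proof (intro nn_integral_mono)
    fix x
    show "ennreal (normal_density 0 \<sigma> x) * indicator {a<..} x
        \<le> ennreal (x * normal_density 0 \<sigma> x / a) * indicator {a..} x"
    proof (cases "a < x")
      case True
      then have "normal_density 0 \<sigma> x \<le> x * normal_density 0 \<sigma> x / a"
        using a by (simp add: field_simps mult_right_mono)
      then show ?thesis using True by (simp add: indicator_def ennreal_leI)
    qed (auto simp: indicator_def)
  qed
  also have "\<dots> = ennreal (0 - (- \<sigma>\<^sup>2 / a * normal_density 0 \<sigma> a))"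
  proof (rule nn_integral_FTC_atLeast[where F="\<lambda>x. - \<sigma>\<^sup>2 / a * normal_density 0 \<sigma> x"])
    show "(\<lambda>x. x * normal_density 0 \<sigma> x / a) \<in> borel_measurable borel" by measurable
    fix x assume "a \<le> x"
    then show "0 \<le> x * normal_density 0 \<sigma> x / a" using a by simp
    show "((\<lambda>x. - \<sigma>\<^sup>2 / a * normal_density 0 \<sigma> x) has_real_derivative x * normal_density 0 \<sigma> x / a) (at x)"
      unfolding normal_density_def
      using \<sigma> a by (auto intro!: derivative_eq_intros simp: field_simps power2_eq_square)
  next
    show "((\<lambda>x. - \<sigma>\<^sup>2 / a * normal_density 0 \<sigma> x) \<longlongrightarrow> 0) at_top"
      unfolding normal_density_def using \<sigma> by real_asymp
  qed
  finally show ?thesis by simp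
qed

lemma (in prob_space) prob_abs_normal_greater_le:
  fixes W :: "'a \<Rightarrow> real"
  assumes W: "distributed M lborel W (\<lambda>x. ennreal (normal_density 0 \<sigma> x))"
    and \<sigma>: "0 < \<sigma>" and a: "0 < a"
  shows "prob {\<omega> \<in> space M. a < \<bar>W \<omega>\<bar>} \<le> 1 / Cfun (a / (sqrt 2 * \<sigma>))"
proof -
  have tail: "prob {\<omega> \<in> space M. a < V \<omega>} \<le> \<sigma>\<^sup>2 / a * normal_density 0 \<sigma> a"
    if V: "distributed M lborel V (\<lambda>x. ennreal (normal_density 0 \<sigma> x))" for V
  proof -
    have "{\<omega> \<in> space M. a < V \<omega>} = V -` {a<..} \<inter> space M" by auto
    then have "ennreal (prob {\<omega> \<in> space M. a < V \<omega>})
        = (\<integral>\<^sup>+x. ennreal (normal_density 0 \<sigma> x) * indicator {a<..} x \<partial>lborel)"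
      using distributed_emeasure[OF V, of "{a<..}"] by (simp add: emeasure_eq_measure)
    also have "\<dots> \<le> ennreal (\<sigma>\<^sup>2 / a * normal_density 0 \<sigma> a)"
      by (rule nn_integral_normal_density_tail_le[OF \<sigma> a])
    finally show ?thesis using a by (subst (asm) ennreal_le_iff) auto
  qed
  have [measurable]: "W \<in> borel_measurable M" using distributed_measurable[OF W] by simp
  have "prob {\<omega> \<in> space M. a < \<bar>W \<omega>\<bar>}
      \<le> prob ({\<omega> \<in> space M. a < W \<omega>} \<union> {\<omega> \<in> space M. a < - W \<omega>})"
    by (rule finite_measure_mono) auto
  also have "\<dots> \<le> prob {\<omega> \<in> space M. a < W \<omega>} + prob {\<omega> \<in> space M. a < - W \<omega>}"
    by (rule measure_Un_le) measurable
  also have "\<dots> \<le> 2 * (\<sigma>\<^sup>2 / a * normal_density 0 \<sigma> a)"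
    using tail[OF W] tail[OF normal_density_affine[OF W \<sigma>, of "-1" 0, simplified]] by simp
  also have "\<dots> = 1 / Cfun (a / (sqrt 2 * \<sigma>))"
    unfolding normal_density_def Cfun_def using \<sigma> a
    by (simp add: field_simps power_mult_distrib real_sqrt_mult exp_minus power2_eq_square)
  finally show ?thesis .
qed

section \<open>Isotropic Gaussian vectors\<close>

lemma density_PiM_prod_normal:
  fixes I :: "'b set"
  assumes fin: "finite I" and \<sigma>: "0 < \<sigma>"
  shows "density (\<Pi>\<^sub>M b\<in>I. lborel) (\<lambda>g. \<Prod>b\<in>I. ennreal (normal_density 0 \<sigma> (g b)))
     = (\<Pi>\<^sub>M b\<in>I. density lborel (\<lambda>x. ennreal (normal_density 0 \<sigma> x)))"
proof -
  let ?N = "\<lambda>b::'b. density lborel (\<lambda>x. ennreal (normal_density 0 \<sigma> x))"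
  interpret N: product_sigma_finite ?N
    unfolding product_sigma_finite_def
    using prob_space_imp_sigma_finite[OF prob_space_normal_density] \<sigma> by blast
  interpret L: product_sigma_finite "\<lambda>_::'b. lborel :: real measure"
    unfolding product_sigma_finite_def by (auto intro: lborel.sigma_finite_measure_axioms)
  show ?thesis
  proof (rule N.PiM_eqI[OF fin])
    show "sets (density (\<Pi>\<^sub>M b\<in>I. lborel) (\<lambda>g. \<Prod>b\<in>I. ennreal (normal_density 0 \<sigma> (g b))))
        = sets (\<Pi>\<^sub>M b\<in>I. ?N b)"
      unfolding sets_density by (intro sets_PiM_cong) auto
    fix A assume "\<And>i. i \<in> I \<Longrightarrow> A i \<in> sets (?N i)"
    then have A: "\<And>i. i \<in> I \<Longrightarrow> A i \<in> sets borel" by simp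
    have ind: "indicator (Pi\<^sub>E I A) g = (\<Prod>b\<in>I. indicator (A b) (g b) :: ennreal)"
      if "g \<in> space (\<Pi>\<^sub>M b\<in>I. (lborel :: real measure))" for g
    proof (cases "g \<in> Pi\<^sub>E I A")
      case False
      with that obtain b where "b \<in> I" "g b \<notin> A b" by (auto simp: space_PiM PiE_def Pi_def)
      then show ?thesis using False fin by (auto simp: indicator_def intro!: prod_zero)
    qed (use fin in \<open>auto simp: indicator_def PiE_def Pi_def intro!: prod.neutral\<close>)
    have "emeasure (density (\<Pi>\<^sub>M b\<in>I. lborel) (\<lambda>g. \<Prod>b\<in>I. ennreal (normal_density 0 \<sigma> (g b)))) (Pi\<^sub>E I A)
       = (\<integral>\<^sup>+g. (\<Prod>b\<in>I. ennreal (normal_density 0 \<sigma> (g b))) * indicator (Pi\<^sub>E I A) g \<partial>(\<Pi>\<^sub>M b\<in>I. lborel))"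
      using A by (intro emeasure_density) (measurable, auto intro!: sets_PiM_I_finite fin)
    also have "\<dots> = (\<integral>\<^sup>+g. (\<Prod>b\<in>I. ennreal (normal_density 0 \<sigma> (g b)) * indicator (A b) (g b))
        \<partial>(\<Pi>\<^sub>M b\<in>I. lborel))"
      by (intro nn_integral_cong) (simp add: ind prod.distrib)
    also have "\<dots> = (\<Prod>b\<in>I. (\<integral>\<^sup>+x. ennreal (normal_density 0 \<sigma> x) * indicator (A b) x \<partial>lborel))"
      using A by (intro L.product_nn_integral_prod fin) auto
    also have "\<dots> = (\<Prod>b\<in>I. emeasure (?N b) (A b))"
      using A by (intro prod.cong refl) (simp add: emeasure_density)
    finally show "emeasure (density (\<Pi>\<^sub>M b\<in>I. lborel) (\<lambda>g. \<Prod>b\<in>I. ennreal (normal_density 0 \<sigma> (g b))))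
        (Pi\<^sub>E I A) = (\<Prod>b\<in>I. emeasure (?N b) (A b))" .
  qed
qed

lemma (in prob_space) distr_coordinates_isotropic_normal:
  fixes X :: "'a \<Rightarrow> 'b::euclidean_space"
  assumes \<sigma>: "0 < \<sigma>"
    and X: "distributed M lborel X (\<lambda>x. ennreal (\<Prod>b\<in>Basis. normal_density 0 \<sigma> (x \<bullet> b)))"
  shows "distr M (\<Pi>\<^sub>M b\<in>Basis. lborel) (\<lambda>\<omega>. \<lambda>b\<in>Basis. X \<omega> \<bullet> b)
    = (\<Pi>\<^sub>M b\<in>Basis. density lborel (\<lambda>x. ennreal (normal_density 0 \<sigma> x)))"
proof -
  define P where "P = (\<Pi>\<^sub>M b\<in>(Basis::'b set). (lborel::real measure))"
  define \<phi> where "\<phi> = (\<lambda>f. \<Sum>b\<in>(Basis::'b set). f b *\<^sub>R b)"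
  define \<psi> where "\<psi> = (\<lambda>x::'b. \<lambda>b\<in>Basis. x \<bullet> b)"
  define f where "f = (\<lambda>x::'b. ennreal (\<Prod>b\<in>Basis. normal_density 0 \<sigma> (x \<bullet> b)))"
  have Xm: "X \<in> measurable M borel" using distributed_measurable[OF X] by simp
  have \<psi>m: "\<psi> \<in> measurable borel P" unfolding \<psi>_def P_def by measurable
  have \<phi>m: "\<phi> \<in> measurable P borel" unfolding \<phi>_def P_def by measurable
  have fm: "f \<in> borel_measurable borel" using distributed_borel_measurable[OF X] unfolding f_def by simp
  have \<phi>_inner: "\<phi> g \<bullet> b = g b" if "b \<in> Basis" for g b
    using that by (simp add: \<phi>_def inner_sum_left inner_Basis if_distrib cong: if_cong)
  have \<psi>\<phi>: "\<psi> (\<phi> g) = g" if "g \<in> space P" for g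
    using that by (auto simp: P_def space_PiM PiE_def extensional_def \<psi>_def \<phi>_inner)
  have "distr M P (\<lambda>\<omega>. \<psi> (X \<omega>)) = distr (distr M lborel X) P \<psi>"
    by (subst distr_distr) (use Xm \<psi>m in \<open>auto simp: comp_def\<close>)
  also have "distr M lborel X = density lborel f"
    using X unfolding f_def by (simp add: distributed_distr_eq_density)
  also have "density lborel f = distr (density P (\<lambda>g. f (\<phi> g))) borel \<phi>"
    unfolding P_def \<phi>_def by (subst lborel_eq) (rule density_distr[OF fm \<phi>m[unfolded P_def \<phi>_def]])
  also have "distr (distr (density P (\<lambda>g. f (\<phi> g))) borel \<phi>) P \<psi>
      = distr (density P (\<lambda>g. f (\<phi> g))) P (\<lambda>x. x)"
    by (subst distr_distr) (use \<psi>m \<phi>m in \<open>auto intro!: distr_cong simp: \<psi>\<phi>\<close>)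
  also have "\<dots> = density P (\<lambda>g. f (\<phi> g))"
    by (rule distr_id2) simp
  also have "\<dots> = density P (\<lambda>g. \<Prod>b\<in>Basis. ennreal (normal_density 0 \<sigma> (g b)))"
  proof (rule density_cong)
    show "(\<lambda>g. f (\<phi> g)) \<in> borel_measurable P" using measurable_compose[OF \<phi>m fm] .
    show "(\<lambda>g. \<Prod>b\<in>Basis. ennreal (normal_density 0 \<sigma> (g b))) \<in> borel_measurable P"
      unfolding P_def by measurable
  qed (auto simp: f_def \<phi>_inner prod_ennreal)
  finally show ?thesis
    unfolding P_def \<psi>_def density_PiM_prod_normal[OF finite_Basis \<sigma>] .
qed

lemma (in prob_space) isotropic_normal_coordinates:
  fixes X :: "'a \<Rightarrow> 'b::euclidean_space"
  assumes \<sigma>: "0 < \<sigma>"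
    and X: "distributed M lborel X (\<lambda>x. ennreal (\<Prod>b\<in>Basis. normal_density 0 \<sigma> (x \<bullet> b)))"
  shows "indep_vars (\<lambda>_. borel) (\<lambda>b \<omega>. X \<omega> \<bullet> b) Basis"
    and "\<And>b. b \<in> Basis \<Longrightarrow>
      distributed M lborel (\<lambda>\<omega>. X \<omega> \<bullet> b) (\<lambda>x. ennreal (normal_density 0 \<sigma> x))"
proof -
  let ?N = "density lborel (\<lambda>x. ennreal (normal_density 0 \<sigma> x))"
  note coords = distr_coordinates_isotropic_normal[OF \<sigma> X]
  have Xm: "X \<in> measurable M borel" using distributed_measurable[OF X] by simp
  have marginal: "distr M lborel (\<lambda>\<omega>. X \<omega> \<bullet> b) = ?N" if b: "b \<in> Basis" for b
  proof -
    have "distr M lborel (\<lambda>\<omega>. X \<omega> \<bullet> b)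
        = distr (distr M (\<Pi>\<^sub>M b\<in>Basis. lborel) (\<lambda>\<omega>. \<lambda>b\<in>Basis. X \<omega> \<bullet> b)) lborel (\<lambda>g. g b)"
      by (subst distr_distr) (use Xm b in \<open>auto simp: comp_def\<close>)
    also have "\<dots> = ?N"
      unfolding coords using distr_PiM_component[OF prob_space_normal_density[OF \<sigma>] b]
      by (simp cong: distr_cong)
    finally show ?thesis .
  qed
  show "distributed M lborel (\<lambda>\<omega>. X \<omega> \<bullet> b) (\<lambda>x. ennreal (normal_density 0 \<sigma> x))"
    if "b \<in> Basis" for b
    unfolding distributed_def using marginal[OF that] Xm by auto
  have "indep_vars (\<lambda>_. lborel) (\<lambda>b \<omega>. X \<omega> \<bullet> b) Basis"
    by (subst indep_vars_iff_distr_eq_PiM)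
      (use Xm in \<open>auto simp: coords marginal intro!: PiM_cong\<close>)
  then show "indep_vars (\<lambda>_. borel) (\<lambda>b \<omega>. X \<omega> \<bullet> b) Basis"
    by (rule indep_vars_compose2[where Y="\<lambda>_ x. x"]) simp
qed

lemma (in prob_space) isotropic_normal_inner:
  fixes X :: "'a \<Rightarrow> 'b::euclidean_space"
  assumes \<sigma>: "0 < \<sigma>"
    and X: "distributed M lborel X (\<lambda>x. ennreal (\<Prod>b\<in>Basis. normal_density 0 \<sigma> (x \<bullet> b)))"
    and v: "v \<noteq> 0"
  shows "distributed M lborel (\<lambda>\<omega>. X \<omega> \<bullet> v) (\<lambda>x. ennreal (normal_density 0 (\<sigma> * norm v) x))"
proof -
  define B where "B = {b\<in>Basis. v \<bullet> b \<noteq> 0}"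
  have B: "B \<subseteq> Basis" "finite B" unfolding B_def by auto
  have "B \<noteq> {}" using v euclidean_all_zero_iff[of v] unfolding B_def by auto
  have sum_B: "(\<Sum>b\<in>Basis. g b * (v \<bullet> b)) = (\<Sum>b\<in>B. g b * (v \<bullet> b))" for g :: "'b \<Rightarrow> real"
    by (rule sum.mono_neutral_right) (auto simp: B_def)
  have "indep_vars (\<lambda>_. borel) (\<lambda>b \<omega>. (v \<bullet> b) * (X \<omega> \<bullet> b)) B"
    using indep_vars_compose2[OF indep_vars_subset[OF isotropic_normal_coordinates(1)[OF \<sigma> X] B(1)],
        of "\<lambda>b x. (v \<bullet> b) * x" "\<lambda>_. borel"]
    by simp
  moreover have "distributed M lborel (\<lambda>\<omega>. (v \<bullet> b) * (X \<omega> \<bullet> b))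
      (\<lambda>x. ennreal (normal_density 0 (\<bar>v \<bullet> b\<bar> * \<sigma>) x))" if "b \<in> B" for b
    using normal_density_affine[OF isotropic_normal_coordinates(2)[OF \<sigma> X, of b] \<sigma>, of "v \<bullet> b" 0]
      that B(1) by (auto simp: B_def)
  ultimately have "distributed M lborel (\<lambda>\<omega>. \<Sum>b\<in>B. (v \<bullet> b) * (X \<omega> \<bullet> b))
      (\<lambda>x. ennreal (normal_density 0 (sqrt (\<Sum>b\<in>B. (\<bar>v \<bullet> b\<bar> * \<sigma>)\<^sup>2)) x))"
    using sum_indep_normal[OF B(2) \<open>B \<noteq> {}\<close>, of _ "\<lambda>b. \<bar>v \<bullet> b\<bar> * \<sigma>" "\<lambda>_. 0"] \<sigma>
    by (simp add: B_def)
  moreover have "(\<Sum>b\<in>B. (v \<bullet> b) * (X \<omega> \<bullet> b)) = X \<omega> \<bullet> v" for \<omega>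
    using sum_B[of "\<lambda>b. X \<omega> \<bullet> b"] euclidean_inner[of "X \<omega>" v] by (simp add: ac_simps)
  moreover have "(\<Sum>b\<in>B. (\<bar>v \<bullet> b\<bar> * \<sigma>)\<^sup>2) = (\<sigma> * norm v)\<^sup>2"
  proof -
    have "(\<Sum>b\<in>B. (v \<bullet> b)\<^sup>2) = v \<bullet> v"
      using sum_B[of "\<lambda>b. v \<bullet> b"] euclidean_inner[of v v] by (simp add: power2_eq_square)
    then show ?thesis
      by (simp add: power_mult_distrib sum_distrib_left[symmetric] dot_square_norm ac_simps)
  qed
  ultimately show ?thesis using \<sigma> by simp
qed

lemma cgauss_density_eq_prod_normal:
  fixes x :: "complex^'d"
  assumes s: "0 < s"
  shows "cgauss_density s x = (\<Prod>b\<in>Basis. normal_density 0 (s / sqrt 2) (x \<bullet> b))"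
proof -
  have nd: "normal_density 0 (s / sqrt 2) y = 1 / sqrt (pi * s\<^sup>2) * exp (- (y\<^sup>2 / s\<^sup>2))" for y
    unfolding normal_density_def by (simp add: power_divide)
  have "(\<Sum>b\<in>Basis. (x \<bullet> b)\<^sup>2 / s\<^sup>2) = (norm x)\<^sup>2 / s\<^sup>2"
    by (simp add: sum_divide_distrib[symmetric] euclidean_inner[of x x, symmetric] power2_eq_square
        dot_square_norm)
  then have "(\<Prod>b\<in>Basis. exp (- ((x \<bullet> b)\<^sup>2 / s\<^sup>2))) = exp (- (norm x)\<^sup>2 / s\<^sup>2)"
    by (simp add: exp_sum[symmetric] sum_negf)
  moreover have "(1 / sqrt (pi * s\<^sup>2)) ^ card (Basis :: (complex^'d) set) = (1 / (pi * s\<^sup>2)) ^ CARD('d)"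
    by (simp add: power_divide real_sqrt_power[symmetric] power_mult)
  ultimately show ?thesis
    unfolding cgauss_density_def nd prod.distrib by simp
qed

lemma (in prob_space) sum_inner_indep_cgauss:
  fixes r :: "'t \<Rightarrow> 'a \<Rightarrow> complex^'d"
  assumes J: "finite J" "J \<noteq> {}" and indep: "indep_vars (\<lambda>_. borel) r J"
    and m: "\<And>t. t \<in> J \<Longrightarrow> 0 < m t" and v: "\<And>t. t \<in> J \<Longrightarrow> v t \<noteq> 0"
    and r: "\<And>t. t \<in> J \<Longrightarrow> distributed M lborel (r t) (\<lambda>x. ennreal (cgauss_density (m t) x))"
  shows "distributed M lborel (\<lambda>\<omega>. \<Sum>t\<in>J. r t \<omega> \<bullet> v t)
    (\<lambda>x. ennreal (normal_density 0 (sqrt (\<Sum>t\<in>J. (m t * norm (v t))\<^sup>2 / 2)) x))"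
proof -
  have "distributed M lborel (\<lambda>\<omega>. r t \<omega> \<bullet> v t)
      (\<lambda>x. ennreal (normal_density 0 (m t / sqrt 2 * norm (v t)) x))" if "t \<in> J" for t
    using r[OF that] m[OF that] v[OF that]
    by (intro isotropic_normal_inner) (simp_all add: cgauss_density_eq_prod_normal)
  moreover have "indep_vars (\<lambda>_. borel) (\<lambda>t \<omega>. r t \<omega> \<bullet> v t) J"
    using indep_vars_compose2[OF indep, of "\<lambda>t x. x \<bullet> v t" "\<lambda>_. borel"] by simp
  ultimately show ?thesis
    using sum_indep_normal[OF J, of "\<lambda>t \<omega>. r t \<omega> \<bullet> v t" "\<lambda>t. m t / sqrt 2 * norm (v t)" "\<lambda>_. 0"] m v
    by (simp add: power_mult_distrib power_divide)
qed

section \<open>The Gaussian mechanism\<close>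

lemma cgauss_density_ratio:
  fixes x d :: "complex^'d"
  assumes s: "0 < s"
  shows "cgauss_density s x / cgauss_density s (x + d) = exp (((norm d)\<^sup>2 + 2 * (x \<bullet> d)) / s\<^sup>2)"
proof -
  have "cgauss_density s x / cgauss_density s (x + d)
      = exp (- (norm x)\<^sup>2 / s\<^sup>2) / exp (- (norm (x + d))\<^sup>2 / s\<^sup>2)"
    unfolding cgauss_density_def using s by simp
  also have "\<dots> = exp (((norm d)\<^sup>2 + 2 * (x \<bullet> d)) / s\<^sup>2)"
    unfolding exp_diff[symmetric] using s by (simp add: dot_norm field_simps)
  finally show ?thesis .
qed

lemma privacy_loss_shift:
  assumes m: "\<And>t. t \<in> {1..T} \<Longrightarrow> 0 < m t"
  shows "privacy_loss T m mu mu' (\<lambda>t. mu t + x t)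
    = (\<Sum>t=1..T. (norm (mu t - mu' t) / m t)\<^sup>2)
      + (\<Sum>t=1..T. x t \<bullet> ((2 / (m t)\<^sup>2) *\<^sub>R (mu t - mu' t)))"
proof -
  have "(\<Prod>t=1..T. cgauss_density (m t) (mu t + x t - mu t) / cgauss_density (m t) (mu t + x t - mu' t))
      = (\<Prod>t=1..T. exp ((norm (mu t - mu' t) / m t)\<^sup>2 + x t \<bullet> ((2 / (m t)\<^sup>2) *\<^sub>R (mu t - mu' t))))"
  proof (rule prod.cong[OF refl])
    fix t assume "t \<in> {1..T}"
    then show "cgauss_density (m t) (mu t + x t - mu t) / cgauss_density (m t) (mu t + x t - mu' t)
      = exp ((norm (mu t - mu' t) / m t)\<^sup>2 + x t \<bullet> ((2 / (m t)\<^sup>2) *\<^sub>R (mu t - mu' t)))"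
      using cgauss_density_ratio[OF m, of t "x t" "mu t - mu' t"]
      by (simp add: add_divide_distrib power_divide add_diff_eq add.commute)
  qed
  then show ?thesis
    unfolding privacy_loss_def by (simp add: exp_sum[symmetric] sum.distrib)
qed

lemma (in prob_space) prob_abs_add_normal_le:
  fixes W :: "'a \<Rightarrow> real"
  assumes W: "distributed M lborel W (\<lambda>x. ennreal (normal_density 0 (sqrt (2 * S)) x))"
    and S: "0 < S" and eps: "S + 2 * sqrt S * Cinv (1 / \<delta>) < eps" and \<delta>: "0 < \<delta>" "\<delta> \<le> 1"
  shows "1 - \<delta> \<le> prob {\<omega> \<in> space M. \<bar>S + W \<omega>\<bar> \<le> eps}"
proof -
  define c where "c = Cinv (1 / \<delta>)"
  define a where "a = eps - S"
  have c: "0 < c" "Cfun c = 1 / \<delta>" using Cinv[of "1 / \<delta>"] \<delta> unfolding c_def by simp_all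
  have "2 * sqrt S * c < a" using eps unfolding a_def c_def by simp
  moreover have "sqrt 2 * sqrt (2 * S) = 2 * sqrt S" by (simp add: real_sqrt_mult)
  ultimately have a: "0 < a" and ca: "c < a / (sqrt 2 * sqrt (2 * S))"
    using c S by (auto simp: field_simps intro: less_trans[rotated])
  have [measurable]: "W \<in> borel_measurable M" using distributed_measurable[OF W] by simp
  have "prob {\<omega> \<in> space M. a < \<bar>W \<omega>\<bar>} \<le> 1 / Cfun (a / (sqrt 2 * sqrt (2 * S)))"
    using prob_abs_normal_greater_le[OF W _ a] S by simp
  also have "\<dots> < 1 / Cfun c"
    using Cfun_strict_mono[OF c(1) ca] Cfun_pos[OF c(1)] by (simp add: frac_less2)
  finally have "prob {\<omega> \<in> space M. a < \<bar>W \<omega>\<bar>} < \<delta>" using c \<delta> by simp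
  moreover have "prob (space M - {\<omega> \<in> space M. \<bar>S + W \<omega>\<bar> \<le> eps})
      \<le> prob {\<omega> \<in> space M. a < \<bar>W \<omega>\<bar>}"
    using S by (intro finite_measure_mono) (auto simp: a_def)
  ultimately show ?thesis using prob_compl[of "{\<omega> \<in> space M. \<bar>S + W \<omega>\<bar> \<le> eps}"] by simp
qed

lemma (in prob_space) gaussian_mechanism_dp:
  fixes r :: "nat \<Rightarrow> 'a \<Rightarrow> complex^'d"
  assumes m: "\<And>t. t \<in> {1..T} \<Longrightarrow> 0 < m t"
    and r: "\<And>t. t \<in> {1..T} \<Longrightarrow> distributed M lborel (r t) (\<lambda>x. ennreal (cgauss_density (m t) x))"
    and indep: "indep_vars (\<lambda>_. borel) r {1..T}"
    and eps: "0 \<le> eps" and \<delta>: "0 < \<delta>" "\<delta> \<le> 1"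
    and budget: "(\<Sum>t=1..T. (norm (mu t - mu' t) / m t)\<^sup>2) < R_dp eps \<delta>"
  shows "1 - \<delta> \<le> prob {\<omega> \<in> space M. \<bar>privacy_loss T m mu mu' (\<lambda>t. mu t + r t \<omega>)\<bar> \<le> eps}"
proof -
  define S where "S = (\<Sum>t=1..T. (norm (mu t - mu' t) / m t)\<^sup>2)"
  define v where "v t = (2 / (m t)\<^sup>2) *\<^sub>R (mu t - mu' t)" for t
  \<comment> \<open>Rounds with equal means are left out: \<open>sum_indep_normal\<close> needs positive variances.\<close>
  define J where "J = {t \<in> {1..T}. mu t \<noteq> mu' t}"
  have J: "finite J" "J \<subseteq> {1..T}" unfolding J_def by auto
  have S_J: "S = (\<Sum>t\<in>J. (norm (mu t - mu' t) / m t)\<^sup>2)"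
    unfolding S_def J_def by (rule sum.mono_neutral_right) auto
  have loss: "privacy_loss T m mu mu' (\<lambda>t. mu t + r t \<omega>) = S + (\<Sum>t\<in>J. r t \<omega> \<bullet> v t)" for \<omega>
  proof -
    have "(\<Sum>t=1..T. r t \<omega> \<bullet> v t) = (\<Sum>t\<in>J. r t \<omega> \<bullet> v t)"
      unfolding J_def by (rule sum.mono_neutral_right) (auto simp: v_def)
    then show ?thesis using privacy_loss_shift[OF m, where x="\<lambda>t. r t \<omega>"] by (simp add: S_def v_def)
  qed
  have S_eps: "S + 2 * sqrt S * Cinv (1 / \<delta>) < eps"
    using budget eps \<delta> unfolding S_def
    by (intro add_sqrt_mult_Cinv_less_of_less_R_dp) (auto intro: sum_nonneg)
  show ?thesis
  proof (cases "J = {}")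
    case True
    then have "{\<omega> \<in> space M. \<bar>privacy_loss T m mu mu' (\<lambda>t. mu t + r t \<omega>)\<bar> \<le> eps} = space M"
      using loss S_J eps by simp
    then show ?thesis using prob_space \<delta> by simp
  next
    case False
    have m_J: "0 < m t" and v_J: "v t \<noteq> 0" if "t \<in> J" for t
      using m[of t] that by (auto simp: J_def v_def)
    have "0 < (norm (mu t - mu' t) / m t)\<^sup>2" if "t \<in> J" for t
      using m_J[OF that] that by (simp add: J_def)
    then have "0 < S" unfolding S_J using J(1) False by (intro sum_pos)
    have "(m t * norm (v t))\<^sup>2 / 2 = 2 * (norm (mu t - mu' t) / m t)\<^sup>2" if "t \<in> J" for t
      unfolding v_def norm_scaleR using m_J[OF that] by (simp add: power2_eq_square field_simps)
    then have "(\<Sum>t\<in>J. (m t * norm (v t))\<^sup>2 / 2) = 2 * S"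
      unfolding S_J sum_distrib_left by (rule sum.cong[OF refl])
    moreover have "distributed M lborel (\<lambda>\<omega>. \<Sum>t\<in>J. r t \<omega> \<bullet> v t)
        (\<lambda>x. ennreal (normal_density 0 (sqrt (\<Sum>t\<in>J. (m t * norm (v t))\<^sup>2 / 2)) x))"
      by (rule sum_inner_indep_cgauss[OF J(1) False indep_vars_subset[OF indep J(2)]])
        (use m_J v_J r J in auto)
    ultimately have "distributed M lborel (\<lambda>\<omega>. \<Sum>t\<in>J. r t \<omega> \<bullet> v t)
        (\<lambda>x. ennreal (normal_density 0 (sqrt (2 * S)) x))"
      by simp
    from prob_abs_add_normal_le[OF this \<open>0 < S\<close> S_eps \<delta>] show ?thesis by (simp add: loss)
  qed
qed

section \<open>Over-the-air aggregation\<close>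

lemma eff_std_pos:
  assumes "psd_matrix R" and "0 < eta" and "0 < Na"
  shows "0 < eff_std eta rho R Na"
proof -
  have "0 \<le> Re (quad_form rho R)"
    using assms(1) unfolding psd_matrix_def quad_form_def
    by (auto dest: spec[where x="\<lambda>k. cnj (rho k)"])
  then show ?thesis
    unfolding eff_std_def using assms(2,3) by (intro real_sqrt_gt_zero add_nonneg_pos) simp_all
qed

lemma norm_vector_smult: "norm (c *s x) = cmod c * norm (x :: complex^'d)"
  unfolding norm_vec_def by (simp add: L2_set_right_distrib norm_mult)

lemma norm_cvec: "norm (cvec v) = norm v"
  unfolding norm_vec_def cvec_def by simp

lemma cvec_add: "cvec (a + b) = cvec a + cvec b"
  unfolding cvec_def by (simp add: vec_eq_iff)

lemma cvec_diff: "cvec (a - b) = cvec a - cvec b"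
  unfolding cvec_def by (simp add: vec_eq_iff)

lemma adv_mean_diff:
  assumes others: "\<forall>k. k \<noteq> l \<longrightarrow> Ds k = Ds' k"
    and l: "Ds l = add_mset s M" "Ds' l = add_mset s' M"
  shows "adv_mean eta rho gradf w Ds - adv_mean eta rho gradf w Ds'
    = complex_of_real (sqrt eta) *s (rho l *s cvec (gradf w s - gradf w s'))"
proof -
  let ?F = "\<lambda>Ds k. rho k *s cvec (local_grad gradf w (Ds k))"
  have "(\<Sum>k\<in>UNIV - {l}. ?F Ds k) = (\<Sum>k\<in>UNIV - {l}. ?F Ds' k)"
    using others by (intro sum.cong) auto
  then have "(\<Sum>k\<in>UNIV. ?F Ds k) - (\<Sum>k\<in>UNIV. ?F Ds' k) = ?F Ds l - ?F Ds' l"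
    by (simp add: sum.remove[of UNIV l])
  also have "\<dots> = rho l *s cvec (gradf w s - gradf w s')"
    unfolding l local_grad_def
    by (simp add: cvec_add cvec_diff vector_ssub_ldistrib vector_add_ldistrib)
  finally show ?thesis
    unfolding adv_mean_def by (simp add: vector_ssub_ldistrib[symmetric])
qed

lemma norm_adv_mean_diff_le:
  assumes "neighboring D Ds Ds'" and grad: "\<forall>z. norm (gradf w z) \<le> \<gamma>" and "0 \<le> eta"
  shows "norm (adv_mean eta rho gradf w Ds - adv_mean eta rho gradf w Ds')
    \<le> 2 * \<gamma> * sqrt eta * rho_max rho"
proof -
  obtain l M s s' where "\<forall>k. k \<noteq> l \<longrightarrow> Ds k = Ds' k"
    and "Ds l = add_mset s M" "Ds' l = add_mset s' M"
    using assms(1) unfolding neighboring_def by blast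
  then have "norm (adv_mean eta rho gradf w Ds - adv_mean eta rho gradf w Ds')
      = sqrt eta * (cmod (rho l) * norm (gradf w s - gradf w s'))"
    using \<open>0 \<le> eta\<close> by (simp add: adv_mean_diff norm_vector_smult norm_cvec norm_mult)
  also have "\<dots> \<le> sqrt eta * (rho_max rho * (2 * \<gamma>))"
  proof -
    have rho_l: "cmod (rho l) \<le> rho_max rho" unfolding rho_max_def by (rule Max_ge) auto
    have "norm (gradf w s - gradf w s') \<le> 2 * \<gamma>"
      using norm_triangle_ineq4[of "gradf w s" "gradf w s'"] grad[rule_format, of s]
        grad[rule_format, of s'] by linarith
    then have "cmod (rho l) * norm (gradf w s - gradf w s') \<le> rho_max rho * (2 * \<gamma>)"
      using rho_l order_trans[OF norm_ge_zero rho_l] by (intro mult_mono) auto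
    then show ?thesis using \<open>0 \<le> eta\<close> by (intro mult_left_mono) auto
  qed
  finally show ?thesis by (simp add: ac_simps)
qed

theorem theorem1:
  fixes M :: "'w measure" and T D :: nat
    and h g :: "nat \<Rightarrow> 'k::finite \<Rightarrow> complex"
    and eta :: "nat \<Rightarrow> real"
    and R :: "nat \<Rightarrow> 'k \<Rightarrow> 'k \<Rightarrow> complex" and Na :: real
    and w :: "nat \<Rightarrow> real^'d::finite"
    and gradf :: "real^'d \<Rightarrow> 'z \<Rightarrow> real^'d"
    and gamma :: "nat \<Rightarrow> real"
    and r :: "nat \<Rightarrow> 'w \<Rightarrow> complex^'d"
    and eps delta :: real
  assumes "prob_space M"
    and "\<forall>t\<in>{1..T}. \<forall>k. h t k \<noteq> 0"
    and "\<forall>t\<in>{1..T}. 0 < eta t"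
    and "0 < Na"
    and "\<forall>t\<in>{1..T}. psd_matrix (R t) \<and> (\<Sum>k\<in>UNIV. \<Sum>j\<in>UNIV. R t k j) = 0"
    and "\<forall>t\<in>{1..T}. distributed M lborel (r t)
            (\<lambda>x. ennreal (cgauss_density (eff_std (eta t) (ch_ratio g h t) (R t) Na) x))"
    and "prob_space.indep_vars M (\<lambda>_. borel) r {1..T}"
    and "\<forall>t\<in>{1..T}. \<forall>z. norm (gradf (w t) z) \<le> gamma t"
    and "0 \<le> eps" and "0 < delta" and "delta \<le> 1"
    and "(\<Sum>t=1..T. (2 * gamma t / eff_std (eta t) (ch_ratio g h t) (R t) Na
            * sqrt (eta t) * rho_max (ch_ratio g h t))\<^sup>2) < R_dp eps delta"
  shows "ota_dp M T D (\<lambda>t. eff_std (eta t) (ch_ratio g h t) (R t) Na) r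
           (\<lambda>t Ds. adv_mean (eta t) (ch_ratio g h t) gradf (w t) Ds) eps delta"
  unfolding ota_dp_def
proof (intro allI impI)
  interpret prob_space M by fact
  let ?m = "\<lambda>t. eff_std (eta t) (ch_ratio g h t) (R t) Na"
  let ?mu = "\<lambda>Ds t. adv_mean (eta t) (ch_ratio g h t) gradf (w t) Ds"
  fix Ds Ds' :: "'k \<Rightarrow> 'z multiset" assume neighbors: "neighboring D Ds Ds'"
  have m_pos: "0 < ?m t" if "t \<in> {1..T}" for t
    using assms(3-5) that by (intro eff_std_pos) auto
  have diff_le: "(norm (?mu Ds t - ?mu Ds' t) / ?m t)\<^sup>2
      \<le> (2 * gamma t / ?m t * sqrt (eta t) * rho_max (ch_ratio g h t))\<^sup>2" if "t \<in> {1..T}" for t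
  proof -
    have "0 < eta t" "\<forall>z. norm (gradf (w t) z) \<le> gamma t" using assms(3,8) that by auto
    then have "norm (?mu Ds t - ?mu Ds' t) \<le> 2 * gamma t * sqrt (eta t) * rho_max (ch_ratio g h t)"
      by (intro norm_adv_mean_diff_le[OF neighbors]) auto
    then show ?thesis using m_pos[OF that] by (intro power_mono) (auto simp: divide_right_mono)
  qed
  have budget: "(\<Sum>t=1..T. (norm (?mu Ds t - ?mu Ds' t) / ?m t)\<^sup>2) < R_dp eps delta"
    using sum_mono[where K="{1..T}" and f="\<lambda>t. (norm (?mu Ds t - ?mu Ds' t) / ?m t)\<^sup>2", OF diff_le] assms(12)
    by linarith
  have r_dist: "distributed M lborel (r t) (\<lambda>x. ennreal (cgauss_density (?m t) x))"
    if "t \<in> {1..T}" for t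
    by (rule bspec[OF assms(6) that])
  show "1 - delta \<le> prob {\<omega> \<in> space M.
      \<bar>privacy_loss T ?m (?mu Ds) (?mu Ds') (\<lambda>t. ?mu Ds t + r t \<omega>)\<bar> \<le> eps}"
    by (rule gaussian_mechanism_dp[where m = ?m and mu = "?mu Ds" and mu' = "?mu Ds'",
          OF m_pos r_dist assms(7,9-11) budget])
qed

end
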